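(* Let $d\geq 2$ and let $\rho^s$ be a state on $H_d=\mathbb{C}^d$ of rank two whose diagonal (in the computational basis) is supported on two indices, i.e. there are $k\neq l$ with $\rho^s_{kk}>0$, $\rho^s_{ll}>0$ and $\rho^s_{kk}+\rho^s_{ll}=1$. Then there exists an incoherent operation $\Lambda$ on $H_d\otimes H_d$ such that $\Lambda(\rho^s\otimes|0\rangle\langle 0|)$ is Bell-nonlocal if and only if $\rho^s$ is coherent.
   Context: Coherence is taken with respect to the computational basis of $H_d$ and the product computational basis of $H_d\otimes H_d$. A state is incoherent if it is diagonal in this basis, and coherent otherwise. An incoherent operation is a completely positive trace-preserving map $\Lambda(\rho)=\sum_j K_j\rho K_j^\dagger$ with $K_j\mathcal{I}K_j^\dagger\subseteq\mathcal{I}$ for all $j$, where $\mathcal{I}$ is the set of incoherent states. A state is Bell-nonlocal if it violates some Bell inequality, i.e. it does not admit a local hidden variable model. *)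

theory Defs
  imports "Jordan_Normal_Form.DL_Rank" "Jordan_Normal_Form.Schur_Decomposition"
begin

text \<open>Basis index i of H_d is the computational basis vector; in H_dA (x) H_dB the
  product basis vector |i> (x) |j> has index i * dB + j.\<close>

definition mtrace :: "complex mat \<Rightarrow> complex" where
  "mtrace A = (\<Sum>i<dim_row A. A $$ (i,i))"

definition quad_form :: "nat \<Rightarrow> complex mat \<Rightarrow> complex vec \<Rightarrow> complex" where
  "quad_form n A v = (\<Sum>i<n. \<Sum>j<n. cnj (v $ i) * A $$ (i,j) * v $ j)"

definition psd :: "nat \<Rightarrow> complex mat \<Rightarrow> bool" where
  "psd n A \<longleftrightarrow> A \<in> carrier_mat n n \<and>
     (\<forall>v \<in> carrier_vec n. Im (quad_form n A v) = 0 \<and> Re (quad_form n A v) \<ge> 0)"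

definition density :: "nat \<Rightarrow> complex mat \<Rightarrow> bool" where
  "density n \<rho> \<longleftrightarrow> psd n \<rho> \<and> mtrace \<rho> = 1"

definition incoherent_state :: "nat \<Rightarrow> complex mat \<Rightarrow> bool" where
  "incoherent_state n \<rho> \<longleftrightarrow> density n \<rho> \<and> diagonal_mat \<rho>"

definition coherent_state :: "nat \<Rightarrow> complex mat \<Rightarrow> bool" where
  "coherent_state n \<rho> \<longleftrightarrow> density n \<rho> \<and> \<not> diagonal_mat \<rho>"

definition kron :: "complex mat \<Rightarrow> complex mat \<Rightarrow> complex mat" where
  "kron A B = mat (dim_row A * dim_row B) (dim_col A * dim_col B)
     (\<lambda>(i,j). A $$ (i div dim_row B, j div dim_col B) * B $$ (i mod dim_row B, j mod dim_col B))"

definition ket0_proj :: "nat \<Rightarrow> complex mat" where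
  "ket0_proj d = mat d d (\<lambda>(i,j). if i = 0 \<and> j = 0 then 1 else 0)"

definition apply_kraus :: "nat \<Rightarrow> complex mat list \<Rightarrow> complex mat \<Rightarrow> complex mat" where
  "apply_kraus n Ks \<rho> = foldr (\<lambda>K acc. K * \<rho> * mat_adjoint K + acc) Ks (0\<^sub>m n n)"

definition incoherent_operation :: "nat \<Rightarrow> complex mat list \<Rightarrow> bool" where
  "incoherent_operation n Ks \<longleftrightarrow>
     (\<forall>K \<in> set Ks. K \<in> carrier_mat n n) \<and>
     foldr (\<lambda>K acc. mat_adjoint K * K + acc) Ks (0\<^sub>m n n) = 1\<^sub>m n \<and>
     (\<forall>K \<in> set Ks. \<forall>\<sigma>. incoherent_state n \<sigma> \<longrightarrow> diagonal_mat (K * \<sigma> * mat_adjoint K))"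

definition povm_family :: "nat \<Rightarrow> nat \<Rightarrow> nat \<Rightarrow> (nat \<Rightarrow> nat \<Rightarrow> complex mat) \<Rightarrow> bool" where
  "povm_family n m r M \<longleftrightarrow>
     (\<forall>x<m. (\<forall>a<r. psd n (M x a)) \<and> foldr (\<lambda>a acc. M x a + acc) [0..<r] (0\<^sub>m n n) = 1\<^sub>m n)"

text \<open>Local hidden variable model for the correlations of a bipartite state on C^dA (x) C^dB:
  for every finite Bell scenario (finitely many settings and outcomes, arbitrary POVMs)
  the correlations p(a,b|x,y) = tr(rho (M_{a|x} (x) N_{b|y})) admit a local hidden variable
  decomposition (finitely many hidden variables suffice in a finite scenario).\<close>
definition bell_local :: "nat \<Rightarrow> nat \<Rightarrow> complex mat \<Rightarrow> bool" where
  "bell_local dA dB \<rho> \<longleftrightarrow>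
    (\<forall>mA mB oA oB M N.
       povm_family dA mA oA M \<and> povm_family dB mB oB N \<longrightarrow>
       (\<exists>nh (q :: nat \<Rightarrow> real) (PA :: nat \<Rightarrow> nat \<Rightarrow> nat \<Rightarrow> real) (PB :: nat \<Rightarrow> nat \<Rightarrow> nat \<Rightarrow> real).
          (\<forall>h<nh. q h \<ge> 0) \<and> (\<Sum>h<nh. q h) = 1 \<and>
          (\<forall>h<nh. \<forall>x<mA. (\<forall>a<oA. PA h x a \<ge> 0) \<and> (\<Sum>a<oA. PA h x a) = 1) \<and>
          (\<forall>h<nh. \<forall>y<mB. (\<forall>b<oB. PB h y b \<ge> 0) \<and> (\<Sum>b<oB. PB h y b) = 1) \<and>
          (\<forall>x<mA. \<forall>y<mB. \<forall>a<oA. \<forall>b<oB.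
             mtrace (\<rho> * kron (M x a) (N y b)) = complex_of_real (\<Sum>h<nh. q h * PA h x a * PB h y b))))"

definition bell_nonlocal :: "nat \<Rightarrow> nat \<Rightarrow> complex mat \<Rightarrow> bool" where
  "bell_nonlocal dA dB \<rho> \<longleftrightarrow> density (dA * dB) \<rho> \<and> \<not> bell_local dA dB \<rho>"

end

theory Submission
  imports Defs
begin

text \<open>
  If \<open>\<rho>\<close> is diagonal, then \<open>\<rho> \<otimes> |0\<rangle>\<langle>0|\<close> is incoherent, an incoherent operation keeps it
  diagonal, and a diagonal bipartite state is a classical mixture of product basis states: the basis
  index itself is a local hidden variable.

  Conversely, \<open>\<rho>\<^sub>k\<^sub>k + \<rho>\<^sub>l\<^sub>l = 1\<close> forces \<open>\<rho>\<close> to live on \<open>span {|k\<rangle>, |l\<rangle>}\<close>, so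
  \<open>\<rho> \<otimes> |0\<rangle>\<langle>0|\<close> lives on \<open>span {|k0\<rangle>, |l0\<rangle>}\<close>. The permutation unitary exchanging \<open>|l0\<rangle>\<close>
  and \<open>|l1\<rangle>\<close> is incoherent and turns it into the effectively two-qubit state on
  \<open>span {|k0\<rangle>, |l1\<rangle>}\<close> whose coherence is \<open>\<rho>\<^sub>k\<^sub>l\<close>. Measuring \<open>\<sigma>\<^sub>z\<close> and a phase-adjusted
  \<open>\<sigma>\<^sub>x\<close> on Alice's qubit and two real rotations on Bob's gives the CHSH value
  \<open>2(\<alpha>\<^sup>2 - \<beta>\<^sup>2) + 8\<alpha>\<beta>|\<rho>\<^sub>k\<^sub>l|\<close>, which exceeds the local bound 2 for suitable \<open>\<alpha>, \<beta>\<close>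
  as soon as \<open>\<rho>\<^sub>k\<^sub>l \<noteq> 0\<close>.
\<close>

section \<open>Matrices and Kronecker products\<close>

lemma mat_adjoint_eq: "mat_adjoint A = mat (dim_col A) (dim_row A) (\<lambda>(i,j). cnj (A $$ (j,i)))"
  unfolding mat_adjoint_def by (rule eq_matI) (auto simp: mat_of_rows_index)

lemma mat_adjoint_carrier [simp]: "(A :: complex mat) \<in> carrier_mat n m \<Longrightarrow> mat_adjoint A \<in> carrier_mat m n"
  unfolding mat_adjoint_eq by auto

lemma index_mult_mat_sum:
  "A \<in> carrier_mat n m \<Longrightarrow> B \<in> carrier_mat m p \<Longrightarrow> i < n \<Longrightarrow> j < p \<Longrightarrow>
    (A * B) $$ (i,j) = (\<Sum>t<m. A $$ (i,t) * B $$ (t,j))"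
  by (simp add: scalar_prod_def atLeast0LessThan)

lemma sum_lessThan_single:
  fixes n :: nat
  assumes "i < n" and "\<And>t. t < n \<Longrightarrow> t \<noteq> i \<Longrightarrow> f t = 0"
  shows "(\<Sum>t<n. f t) = f i"
proof -
  have "(\<Sum>t<n. f t) = (\<Sum>t\<in>{i}. f t)"
    using assms by (intro sum.mono_neutral_right) auto
  then show ?thesis by simp
qed

lemma sum_lessThan_pair:
  fixes n :: nat
  assumes "i < n" and "j < n" and "i \<noteq> j" and "\<And>t. t < n \<Longrightarrow> t \<noteq> i \<Longrightarrow> t \<noteq> j \<Longrightarrow> f t = 0"
  shows "(\<Sum>t<n. f t) = f i + f j"
proof -
  have "(\<Sum>t<n. f t) = (\<Sum>t\<in>{i,j}. f t)"
    using assms by (intro sum.mono_neutral_right) auto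
  then show ?thesis using assms(3) by simp
qed

lemma mtrace_mult:
  assumes "A \<in> carrier_mat n n" and "B \<in> carrier_mat n n"
  shows "mtrace (A * B) = (\<Sum>i<n. \<Sum>j<n. A $$ (i,j) * B $$ (j,i))"
  unfolding mtrace_def using assms by (simp add: scalar_prod_def atLeast0LessThan)

lemma kron_carrier [simp]:
  "kron A B \<in> carrier_mat (dim_row A * dim_row B) (dim_col A * dim_col B)"
  by (simp add: kron_def)

lemma dim_kron [simp]:
  "dim_row (kron A B) = dim_row A * dim_row B" "dim_col (kron A B) = dim_col A * dim_col B"
  by (simp_all add: kron_def)

lemma kron_carrier_mat:
  "A \<in> carrier_mat n n' \<Longrightarrow> B \<in> carrier_mat m m' \<Longrightarrow> kron A B \<in> carrier_mat (n * m) (n' * m')"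
  by (metis carrier_matD kron_carrier)

lemma kron_entry:
  "i < dim_row A * dim_row B \<Longrightarrow> j < dim_col A * dim_col B \<Longrightarrow>
    kron A B $$ (i,j) = A $$ (i div dim_row B, j div dim_col B) * B $$ (i mod dim_row B, j mod dim_col B)"
  by (simp add: kron_def)

lemma mtrace_kron:
  assumes A: "A \<in> carrier_mat n n" and B: "B \<in> carrier_mat m m"
  shows "mtrace (kron A B) = mtrace A * mtrace B"
proof -
  have "mtrace (kron A B) = (\<Sum>i<n * m. A $$ (i div m, i div m) * B $$ (i mod m, i mod m))"
    unfolding mtrace_def using A B by (auto simp: kron_def intro!: sum.cong)
  also have "\<dots> = (\<Sum>a<n. \<Sum>i\<in>{a*m..<a*m+m}. A $$ (i div m, i div m) * B $$ (i mod m, i mod m))"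
    by (simp add: sum.nat_group)
  also have "\<dots> = (\<Sum>a<n. \<Sum>b<m. A $$ ((a*m+b) div m, (a*m+b) div m) * B $$ ((a*m+b) mod m, (a*m+b) mod m))"
  proof (rule sum.cong[OF refl])
    have shift: "(\<Sum>i\<in>{a*m..<a*m+m}. g i) = (\<Sum>b<m. g (a*m+b))" for g :: "nat \<Rightarrow> complex" and a
      using sum.shift_bounds_nat_ivl[of g 0 "a*m" m] by (simp add: atLeast0LessThan add.commute)
    show "(\<Sum>i\<in>{a*m..<a*m+m}. A $$ (i div m, i div m) * B $$ (i mod m, i mod m)) =
      (\<Sum>b<m. A $$ ((a*m+b) div m, (a*m+b) div m) * B $$ ((a*m+b) mod m, (a*m+b) mod m))" for a
      by (rule shift[where g = "\<lambda>i. A $$ (i div m, i div m) * B $$ (i mod m, i mod m)"])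
  qed
  also have "\<dots> = (\<Sum>a<n. \<Sum>b<m. A $$ (a,a) * B $$ (b,b))"
    by (intro sum.cong refl) auto
  also have "\<dots> = mtrace A * mtrace B"
    unfolding mtrace_def sum_product using A B by simp
  finally show ?thesis .
qed

lemma ket0_proj_carrier [simp]: "ket0_proj d \<in> carrier_mat d d"
  by (simp add: ket0_proj_def)

lemma dim_ket0_proj [simp]: "dim_row (ket0_proj d) = d" "dim_col (ket0_proj d) = d"
  by (simp_all add: ket0_proj_def)

lemma ket0_proj_entry: "i < d \<Longrightarrow> j < d \<Longrightarrow> ket0_proj d $$ (i,j) = (if i = 0 \<and> j = 0 then 1 else 0)"
  by (simp add: ket0_proj_def)

lemma kron_ket0_proj_entry:
  assumes "\<rho> \<in> carrier_mat d d" "i < d * d" "j < d * d"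
  shows "kron \<rho> (ket0_proj d) $$ (i,j) = (if i mod d = 0 \<and> j mod d = 0 then \<rho> $$ (i div d, j div d) else 0)"
proof -
  have "0 < d" using assms(2) by (cases "d = 0") auto
  then show ?thesis using assms by (simp add: kron_entry ket0_proj_entry)
qed

section \<open>Positive semidefinite matrices\<close>

lemma psd_carrier: "psd n A \<Longrightarrow> A \<in> carrier_mat n n"
  by (simp add: psd_def)

lemma psd_quad_form: "psd n A \<Longrightarrow> v \<in> carrier_vec n \<Longrightarrow> Im (quad_form n A v) = 0 \<and> Re (quad_form n A v) \<ge> 0"
  by (simp add: psd_def)

definition two_point_vec :: "nat \<Rightarrow> nat \<Rightarrow> nat \<Rightarrow> complex \<Rightarrow> complex \<Rightarrow> complex vec" where
  "two_point_vec n i j x y = vec n (\<lambda>t. if t = i then x else if t = j then y else 0)"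

lemma two_point_vec_carrier [simp]: "two_point_vec n i j x y \<in> carrier_vec n"
  by (simp add: two_point_vec_def)

lemma quad_form_two_point_vec:
  assumes "i < n" "j < n" "i \<noteq> j"
  shows "quad_form n A (two_point_vec n i j x y) =
    cnj x * A $$ (i,i) * x + cnj x * A $$ (i,j) * y + cnj y * A $$ (j,i) * x + cnj y * A $$ (j,j) * y"
proof -
  let ?v = "two_point_vec n i j x y"
  have v: "?v $ i = x" "?v $ j = y" "\<And>t. t < n \<Longrightarrow> t \<noteq> i \<Longrightarrow> t \<noteq> j \<Longrightarrow> ?v $ t = 0"
    using assms by (auto simp: two_point_vec_def)
  have "quad_form n A ?v = (\<Sum>s<n. cnj (?v $ s) * A $$ (s,i) * x + cnj (?v $ s) * A $$ (s,j) * y)"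
    unfolding quad_form_def by (intro sum.cong refl, subst sum_lessThan_pair[OF assms]) (simp_all add: v)
  also have "\<dots> = cnj x * A $$ (i,i) * x + cnj x * A $$ (i,j) * y + (cnj y * A $$ (j,i) * x + cnj y * A $$ (j,j) * y)"
    by (subst sum_lessThan_pair[OF assms]) (simp_all add: v)
  finally show ?thesis by (simp add: add.assoc)
qed

lemma psd_diag:
  assumes "psd n A" "i < n"
  shows "Im (A $$ (i,i)) = 0" and "Re (A $$ (i,i)) \<ge> 0"
proof -
  have "quad_form n A (unit_vec n i) = A $$ (i,i)"
    unfolding quad_form_def using assms(2)
    by (subst sum_lessThan_single[of i], simp_all, subst sum_lessThan_single[of i], simp_all)
  moreover have "Im (quad_form n A (unit_vec n i)) = 0 \<and> Re (quad_form n A (unit_vec n i)) \<ge> 0"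
    by (rule psd_quad_form[OF assms(1)]) simp
  ultimately show "Im (A $$ (i,i)) = 0" and "Re (A $$ (i,i)) \<ge> 0" by simp_all
qed

lemma psd_hermitian:
  assumes "psd n A" "i < n" "j < n"
  shows "A $$ (j,i) = cnj (A $$ (i,j))"
proof (cases "i = j")
  case True
  then show ?thesis using psd_diag(1)[OF assms(1,2)] by (simp add: complex_eq_iff)
next
  case False
  have real_diag: "Im (A $$ (i,i)) = 0" "Im (A $$ (j,j)) = 0"
    using psd_diag(1) assms by blast+
  have "Im (quad_form n A (two_point_vec n i j 1 1)) = 0"
    using psd_quad_form[OF assms(1)] by simp
  then have "Im (A $$ (i,j)) + Im (A $$ (j,i)) = 0"
    using quad_form_two_point_vec[OF assms(2,3) False] real_diag by simp
  moreover have "Im (quad_form n A (two_point_vec n i j 1 \<i>)) = 0"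
    using psd_quad_form[OF assms(1)] by simp
  then have "Re (A $$ (i,j)) - Re (A $$ (j,i)) = 0"
    using quad_form_two_point_vec[OF assms(2,3) False] real_diag by simp
  ultimately show ?thesis by (simp add: complex_eq_iff)
qed

lemma psd_diag_zero_imp_row_zero:
  assumes "psd n A" "i < n" "j < n" "A $$ (i,i) = 0"
  shows "A $$ (i,j) = 0"
proof (rule ccontr)
  define c where "c = A $$ (i,j)"
  assume "A $$ (i,j) \<noteq> 0"
  then have c0: "cmod c > 0" and ij: "i \<noteq> j" using assms(4) by (auto simp: c_def)
  define t where "t = (Re (A $$ (j,j)) + 1) / (2 * (cmod c)^2)"
  define x where "x = - complex_of_real t * c"
  have cx: "cnj x * c = - complex_of_real (t * (cmod c)^2)" "cnj c * x = - complex_of_real (t * (cmod c)^2)"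
    unfolding x_def using complex_norm_square[of c] by (simp_all add: mult.commute mult.left_commute)
  have "quad_form n A (two_point_vec n i j x 1) = cnj x * c + cnj c * x + A $$ (j,j)"
    using quad_form_two_point_vec[OF assms(2,3) ij] psd_hermitian[OF assms(1-3)] assms(4) by (simp add: c_def)
  also have "\<dots> = A $$ (j,j) - complex_of_real (Re (A $$ (j,j)) + 1)"
    using c0 by (simp add: cx t_def)
  finally have "Re (quad_form n A (two_point_vec n i j x 1)) = -1" by simp
  moreover have "Re (quad_form n A (two_point_vec n i j x 1)) \<ge> 0"
    using psd_quad_form[OF assms(1) two_point_vec_carrier] by blast
  ultimately show False by simp
qed

definition diag_plus_rank_one :: "nat \<Rightarrow> (nat \<Rightarrow> real) \<Rightarrow> complex vec \<Rightarrow> complex mat" where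
  "diag_plus_rank_one n D w =
     mat n n (\<lambda>(i,j). (if i = j then complex_of_real (D i) else 0) + w $ i * cnj (w $ j))"

lemma diag_plus_rank_one_carrier [simp]: "diag_plus_rank_one n D w \<in> carrier_mat n n"
  by (simp add: diag_plus_rank_one_def)

lemma dim_diag_plus_rank_one [simp]:
  "dim_row (diag_plus_rank_one n D w) = n" "dim_col (diag_plus_rank_one n D w) = n"
  by (simp_all add: diag_plus_rank_one_def)

lemma diag_plus_rank_one_entry:
  "i < n \<Longrightarrow> j < n \<Longrightarrow>
    diag_plus_rank_one n D w $$ (i,j) = (if i = j then complex_of_real (D i) else 0) + w $ i * cnj (w $ j)"
  by (simp add: diag_plus_rank_one_def)

lemma quad_form_diag_plus_rank_one:
  "quad_form n (diag_plus_rank_one n D w) v =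
    complex_of_real ((\<Sum>i<n. D i * (cmod (v $ i))^2) + (cmod (\<Sum>i<n. cnj (v $ i) * w $ i))^2)"
proof -
  define s where "s = (\<Sum>i<n. cnj (v $ i) * w $ i)"
  have diag: "cnj z * complex_of_real r * z = complex_of_real (r * (cmod z)^2)" for z r
    using complex_norm_square[of z] by (simp add: mult.commute mult.left_commute)
  have "cnj s = (\<Sum>j<n. cnj (w $ j) * v $ j)"
    by (simp add: s_def mult.commute)
  then have rank_one: "(\<Sum>i<n. \<Sum>j<n. (cnj (v $ i) * w $ i) * (cnj (w $ j) * v $ j)) = s * cnj s"
    by (simp only: s_def sum_product)
  have "quad_form n (diag_plus_rank_one n D w) v =
      (\<Sum>i<n. \<Sum>j<n. (if i = j then cnj (v $ i) * complex_of_real (D i) * v $ j else 0)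
        + (cnj (v $ i) * w $ i) * (cnj (w $ j) * v $ j))"
    unfolding quad_form_def by (intro sum.cong refl) (simp add: diag_plus_rank_one_entry algebra_simps)
  also have "\<dots> = (\<Sum>i<n. complex_of_real (D i * (cmod (v $ i))^2)) + s * cnj s"
    by (simp add: sum.distrib diag rank_one)
  finally show ?thesis
    using complex_norm_square[of s] by (simp add: s_def)
qed

lemma psd_diag_plus_rank_one:
  assumes "\<And>i. i < n \<Longrightarrow> D i \<ge> 0"
  shows "psd n (diag_plus_rank_one n D w)"
  unfolding psd_def quad_form_diag_plus_rank_one
  using assms by (auto intro!: add_nonneg_nonneg sum_nonneg)

lemma psd_diagonal:
  assumes A: "A \<in> carrier_mat n n" and "diagonal_mat A"
    and "\<And>i. i < n \<Longrightarrow> Im (A $$ (i,i)) = 0 \<and> Re (A $$ (i,i)) \<ge> 0"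
  shows "psd n A"
proof -
  have "psd n (diag_plus_rank_one n (\<lambda>i. Re (A $$ (i,i))) (0\<^sub>v n))"
    using assms(3) by (intro psd_diag_plus_rank_one) blast
  moreover have "A = diag_plus_rank_one n (\<lambda>i. Re (A $$ (i,i))) (0\<^sub>v n)"
  proof (rule eq_matI)
    fix i j assume "i < dim_row (diag_plus_rank_one n (\<lambda>i. Re (A $$ (i,i))) (0\<^sub>v n))"
      and "j < dim_col (diag_plus_rank_one n (\<lambda>i. Re (A $$ (i,i))) (0\<^sub>v n))"
    then have ij: "i < n" "j < n" by (simp_all add: diag_plus_rank_one_def)
    show "A $$ (i,j) = diag_plus_rank_one n (\<lambda>i. Re (A $$ (i,i))) (0\<^sub>v n) $$ (i,j)"
    proof (cases "i = j")
      case True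
      then show ?thesis using assms(3)[OF ij(1)] ij by (simp add: diag_plus_rank_one_entry complex_eq_iff)
    next
      case False
      then show ?thesis using assms(2) A ij by (simp add: diagonal_mat_def diag_plus_rank_one_entry)
    qed
  qed (use A in \<open>simp_all add: diag_plus_rank_one_def\<close>)
  ultimately show ?thesis by simp
qed

section \<open>Matrices supported on two basis vectors\<close>

definition supported_on :: "nat \<Rightarrow> nat set \<Rightarrow> complex mat \<Rightarrow> bool" where
  "supported_on n S A \<longleftrightarrow> (\<forall>i<n. \<forall>j<n. A $$ (i,j) \<noteq> 0 \<longrightarrow> i \<in> S \<and> j \<in> S)"

lemma supported_on_pair_zero:
  "supported_on n {a,b} A \<Longrightarrow> i < n \<Longrightarrow> j < n \<Longrightarrow> i \<notin> {a,b} \<or> j \<notin> {a,b} \<Longrightarrow> A $$ (i,j) = 0"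
  unfolding supported_on_def by blast

lemma double_sum_supported_on_pair:
  assumes "supported_on n {a,b} A" "a < n" "b < n" "a \<noteq> b"
  shows "(\<Sum>i<n. \<Sum>j<n. A $$ (i,j) * g i j) =
    A $$ (a,a) * g a a + A $$ (a,b) * g a b + A $$ (b,a) * g b a + A $$ (b,b) * g b b"
proof -
  note zero = supported_on_pair_zero[OF assms(1)]
  have "(\<Sum>i<n. \<Sum>j<n. A $$ (i,j) * g i j) = (\<Sum>i<n. A $$ (i,a) * g i a + A $$ (i,b) * g i b)"
    using zero by (intro sum.cong[OF refl] sum_lessThan_pair[OF assms(2-4)]) auto
  also have "\<dots> = (A $$ (a,a) * g a a + A $$ (a,b) * g a b) + (A $$ (b,a) * g b a + A $$ (b,b) * g b b)"
    using zero assms(2,3) by (intro sum_lessThan_pair[OF assms(2-4)]) auto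
  finally show ?thesis by (simp add: add.assoc)
qed

lemma mtrace_supported_on_pair:
  assumes "A \<in> carrier_mat n n" "supported_on n {a,b} A" "a < n" "b < n" "a \<noteq> b"
  shows "mtrace A = A $$ (a,a) + A $$ (b,b)"
proof -
  have "mtrace A = (\<Sum>i<n. A $$ (i,i))" unfolding mtrace_def using assms(1) by simp
  also have "\<dots> = A $$ (a,a) + A $$ (b,b)"
    using supported_on_pair_zero[OF assms(2)] by (intro sum_lessThan_pair[OF assms(3-5)]) auto
  finally show ?thesis .
qed

lemma psd_supported_on_pair:
  assumes A: "A \<in> carrier_mat n n" and supp: "supported_on n {a,b} A" and ab: "a < n" "b < n" "a \<noteq> b"
    and B: "psd m B" and kl: "k < m" "l < m" "k \<noteq> l"
    and "A $$ (a,a) = B $$ (k,k)" "A $$ (a,b) = B $$ (k,l)" "A $$ (b,a) = B $$ (l,k)" "A $$ (b,b) = B $$ (l,l)"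
  shows "psd n A"
  unfolding psd_def
proof (intro conjI ballI A)
  fix v :: "complex vec"
  have "quad_form n A v = (\<Sum>i<n. \<Sum>j<n. A $$ (i,j) * (cnj (v $ i) * v $ j))"
    unfolding quad_form_def by (simp add: ac_simps)
  also have "\<dots> = quad_form m B (two_point_vec m k l (v $ a) (v $ b))"
    unfolding double_sum_supported_on_pair[OF supp ab] quad_form_two_point_vec[OF kl]
    using assms(10-13) by (simp add: ac_simps)
  finally have "quad_form n A v = quad_form m B (two_point_vec m k l (v $ a) (v $ b))" .
  then show "Im (quad_form n A v) = 0" "Re (quad_form n A v) \<ge> 0"
    using psd_quad_form[OF B two_point_vec_carrier] by simp_all
qed

lemma density_supported_on_pair:
  assumes \<rho>: "density d \<rho>" and kl: "k < d" "l < d" "k \<noteq> l" and tr: "\<rho> $$ (k,k) + \<rho> $$ (l,l) = 1"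
  shows "supported_on d {k,l} \<rho>"
proof -
  have psd: "psd d \<rho>" and "mtrace \<rho> = 1" using \<rho> by (auto simp: density_def)
  then have "(\<Sum>i<d. Re (\<rho> $$ (i,i))) = 1"
    using psd_carrier[OF psd] by (simp add: mtrace_def flip: Re_sum)
  moreover have "(\<Sum>i<d. Re (\<rho> $$ (i,i))) = (\<Sum>i\<in>{..<d} - {k,l}. Re (\<rho> $$ (i,i))) + (Re (\<rho> $$ (k,k)) + Re (\<rho> $$ (l,l)))"
    using kl by (subst sum.subset_diff[of "{k,l}"]) auto
  moreover have "Re (\<rho> $$ (k,k)) + Re (\<rho> $$ (l,l)) = 1"
    using arg_cong[OF tr, of Re] by simp
  ultimately have "(\<Sum>i\<in>{..<d} - {k,l}. Re (\<rho> $$ (i,i))) = 0" by linarith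
  then have "Re (\<rho> $$ (i,i)) = 0" if "i < d" "i \<notin> {k,l}" for i
    using that psd_diag(2)[OF psd] by (subst (asm) sum_nonneg_eq_0_iff) auto
  then have diag_zero: "\<rho> $$ (i,i) = 0" if "i < d" "i \<notin> {k,l}" for i
    using that psd_diag(1)[OF psd] by (simp add: complex_eq_iff)
  show ?thesis unfolding supported_on_def
  proof (intro allI impI)
    fix i j assume ij: "i < d" "j < d" and "\<rho> $$ (i,j) \<noteq> 0"
    moreover have "\<rho> $$ (j,i) \<noteq> 0" using calculation psd_hermitian[OF psd ij] by simp
    ultimately have "\<rho> $$ (i,i) \<noteq> 0" "\<rho> $$ (j,j) \<noteq> 0"
      using psd_diag_zero_imp_row_zero[OF psd] by blast+
    then show "i \<in> {k,l} \<and> j \<in> {k,l}" using diag_zero ij by blast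
  qed
qed

lemma supported_on_pair_not_diagonal:
  assumes psd: "psd n \<rho>" and supp: "supported_on n {k,l} \<rho>" and kl: "k < n" "l < n"
    and "\<not> diagonal_mat \<rho>"
  shows "\<rho> $$ (k,l) \<noteq> 0"
proof -
  obtain i j where ij: "i < n" "j < n" "i \<noteq> j" "\<rho> $$ (i,j) \<noteq> 0"
    using assms(5) psd_carrier[OF psd] unfolding diagonal_mat_def by auto
  then have "(i = k \<and> j = l) \<or> (i = l \<and> j = k)" using supp unfolding supported_on_def by blast
  then show ?thesis using ij psd_hermitian[OF psd kl] by auto
qed

section \<open>Incoherent states and operations\<close>

lemma diagonal_mat_kron:
  assumes A: "A \<in> carrier_mat n n" and B: "B \<in> carrier_mat m m"
    and "diagonal_mat A" and "diagonal_mat B"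
  shows "diagonal_mat (kron A B)"
  unfolding diagonal_mat_def
proof (intro allI impI)
  fix i j assume ij: "i < dim_row (kron A B)" "j < dim_col (kron A B)" "i \<noteq> j"
  have "0 < m" using ij A B by (cases "m = 0") auto
  then have bounds: "i div m < n" "j div m < n" "i mod m < m" "j mod m < m"
    using ij A B by (auto simp: less_mult_imp_div_less)
  have "kron A B $$ (i,j) = A $$ (i div m, j div m) * B $$ (i mod m, j mod m)"
    using ij A B by (simp add: kron_entry)
  moreover from ij have "i div m \<noteq> j div m \<or> i mod m \<noteq> j mod m" by (metis div_mult_mod_eq)
  then have "A $$ (i div m, j div m) = 0 \<or> B $$ (i mod m, j mod m) = 0"
    using bounds A B assms(3,4) unfolding diagonal_mat_def by auto
  ultimately show "kron A B $$ (i,j) = 0" by auto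
qed

lemma incoherent_state_kron:
  assumes "incoherent_state n A" and "incoherent_state m B"
  shows "incoherent_state (n * m) (kron A B)"
proof -
  have A: "psd n A" "mtrace A = 1" "diagonal_mat A" and B: "psd m B" "mtrace B = 1" "diagonal_mat B"
    using assms by (auto simp: incoherent_state_def density_def)
  have Ac: "A \<in> carrier_mat n n" and Bc: "B \<in> carrier_mat m m"
    using psd_carrier A(1) B(1) by auto
  have diag: "diagonal_mat (kron A B)" using diagonal_mat_kron[OF Ac Bc A(3) B(3)] .
  have "psd (n * m) (kron A B)"
  proof (rule psd_diagonal[OF kron_carrier_mat[OF Ac Bc] diag])
    fix i assume i: "i < n * m"
    have "0 < m" using i by (cases "m = 0") auto
    then have b: "i div m < n" "i mod m < m" using i by (auto simp: less_mult_imp_div_less)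
    have "kron A B $$ (i,i) = A $$ (i div m, i div m) * B $$ (i mod m, i mod m)"
      using i Ac Bc by (simp add: kron_entry)
    then show "Im (kron A B $$ (i,i)) = 0 \<and> Re (kron A B $$ (i,i)) \<ge> 0"
      using psd_diag[OF A(1) b(1)] psd_diag[OF B(1) b(2)] by simp
  qed
  moreover have "mtrace (kron A B) = 1" using mtrace_kron[OF Ac Bc] A(2) B(2) by simp
  ultimately show ?thesis using diag by (simp add: incoherent_state_def density_def)
qed

lemma incoherent_state_ket0_proj:
  assumes "0 < d"
  shows "incoherent_state d (ket0_proj d)"
proof -
  have "diagonal_mat (ket0_proj d)" by (simp add: diagonal_mat_def ket0_proj_entry)
  moreover have "psd d (ket0_proj d)"
    using calculation by (intro psd_diagonal) (auto simp: ket0_proj_entry)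
  moreover have "mtrace (ket0_proj d) = 1"
    unfolding mtrace_def using assms by (simp add: ket0_proj_entry sum_lessThan_single[of 0])
  ultimately show ?thesis by (simp add: incoherent_state_def density_def)
qed

lemma diagonal_apply_kraus:
  assumes "\<sigma> \<in> carrier_mat n n"
    and "\<And>K. K \<in> set Ks \<Longrightarrow> K \<in> carrier_mat n n \<and> diagonal_mat (K * \<sigma> * mat_adjoint K)"
  shows "apply_kraus n Ks \<sigma> \<in> carrier_mat n n \<and> diagonal_mat (apply_kraus n Ks \<sigma>)"
  using assms(2)
proof (induction Ks)
  case Nil
  then show ?case by (auto simp: apply_kraus_def diagonal_mat_def)
next
  case (Cons K Ks)
  then have K: "K \<in> carrier_mat n n" and "diagonal_mat (K * \<sigma> * mat_adjoint K)"
    and IH: "apply_kraus n Ks \<sigma> \<in> carrier_mat n n" "diagonal_mat (apply_kraus n Ks \<sigma>)" by auto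
  moreover have "K * \<sigma> * mat_adjoint K \<in> carrier_mat n n"
    using K assms(1) by (metis mat_adjoint_carrier mult_carrier_mat)
  moreover have "apply_kraus n (K # Ks) \<sigma> = K * \<sigma> * mat_adjoint K + apply_kraus n Ks \<sigma>"
    by (simp add: apply_kraus_def)
  ultimately show ?case unfolding diagonal_mat_def by auto
qed

lemma incoherent_operation_diagonal:
  assumes "incoherent_operation n Ks" and "incoherent_state n \<sigma>"
  shows "diagonal_mat (apply_kraus n Ks \<sigma>)"
  using assms diagonal_apply_kraus[of \<sigma> n Ks]
  by (auto simp: incoherent_operation_def incoherent_state_def density_def dest: psd_carrier)

definition perm_mat :: "nat \<Rightarrow> (nat \<Rightarrow> nat) \<Rightarrow> complex mat" where
  "perm_mat n p = mat n n (\<lambda>(i,j). if j = p i then 1 else 0)"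

lemma perm_mat_carrier [simp]: "perm_mat n p \<in> carrier_mat n n"
  by (simp add: perm_mat_def)

lemma dim_perm_mat [simp]: "dim_row (perm_mat n p) = n" "dim_col (perm_mat n p) = n"
  by (simp_all add: perm_mat_def)

locale index_involution =
  fixes n :: nat and p :: "nat \<Rightarrow> nat"
  assumes maps_into: "t < n \<Longrightarrow> p t < n" and involutive [simp]: "p (p t) = t"
begin

lemma perm_mat_adjoint: "mat_adjoint (perm_mat n p) = perm_mat n p"
  unfolding mat_adjoint_eq by (rule eq_matI) (auto simp: perm_mat_def)

lemma perm_mat_mult_left:
  assumes "A \<in> carrier_mat n m" "i < n" "j < m"
  shows "(perm_mat n p * A) $$ (i,j) = A $$ (p i, j)"
proof -
  have "(perm_mat n p * A) $$ (i,j) = (\<Sum>t<n. perm_mat n p $$ (i,t) * A $$ (t,j))"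
    by (rule index_mult_mat_sum[OF perm_mat_carrier assms])
  also have "\<dots> = perm_mat n p $$ (i, p i) * A $$ (p i, j)"
    using assms maps_into by (intro sum_lessThan_single) (auto simp: perm_mat_def)
  finally show ?thesis using assms maps_into by (simp add: perm_mat_def)
qed

lemma perm_mat_mult_right:
  assumes "A \<in> carrier_mat m n" "i < m" "j < n"
  shows "(A * perm_mat n p) $$ (i,j) = A $$ (i, p j)"
proof -
  have "(A * perm_mat n p) $$ (i,j) = (\<Sum>t<n. A $$ (i,t) * perm_mat n p $$ (t,j))"
    by (rule index_mult_mat_sum[OF assms(1) perm_mat_carrier assms(2,3)])
  also have "\<dots> = A $$ (i, p j) * perm_mat n p $$ (p j, j)"
    using assms maps_into by (intro sum_lessThan_single) (auto simp: perm_mat_def)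
  finally show ?thesis using assms maps_into by (simp add: perm_mat_def)
qed

lemma perm_mat_conj:
  assumes "A \<in> carrier_mat n n"
  shows "perm_mat n p * A * perm_mat n p = mat n n (\<lambda>(i,j). A $$ (p i, p j))"
proof (rule eq_matI)
  fix i j assume "i < dim_row (mat n n (\<lambda>(i,j). A $$ (p i, p j)))" "j < dim_col (mat n n (\<lambda>(i,j). A $$ (p i, p j)))"
  then have ij: "i < n" "j < n" by simp_all
  have "perm_mat n p * A \<in> carrier_mat n n" using assms by (metis perm_mat_carrier mult_carrier_mat)
  then have "(perm_mat n p * A * perm_mat n p) $$ (i,j) = (perm_mat n p * A) $$ (i, p j)"
    using ij by (rule perm_mat_mult_right)
  also have "\<dots> = A $$ (p i, p j)"
    using assms ij(1) maps_into[OF ij(2)] by (rule perm_mat_mult_left)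
  finally show "(perm_mat n p * A * perm_mat n p) $$ (i,j) = mat n n (\<lambda>(i,j). A $$ (p i, p j)) $$ (i,j)"
    using ij by simp
qed (use assms in simp_all)

lemma perm_mat_square: "perm_mat n p * perm_mat n p = 1\<^sub>m n"
proof -
  have "perm_mat n p * 1\<^sub>m n * perm_mat n p = 1\<^sub>m n"
    unfolding perm_mat_conj[OF one_carrier_mat] by (rule eq_matI) (auto simp: maps_into, metis involutive)
  then show ?thesis by (metis perm_mat_carrier right_mult_one_mat)
qed

lemma apply_kraus_perm_mat:
  assumes "A \<in> carrier_mat n n"
  shows "apply_kraus n [perm_mat n p] A = mat n n (\<lambda>(i,j). A $$ (p i, p j))"
  using assms by (simp add: apply_kraus_def perm_mat_adjoint perm_mat_conj)

lemma incoherent_operation_perm_mat: "incoherent_operation n [perm_mat n p]"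
  unfolding incoherent_operation_def
proof (intro conjI ballI allI impI)
  show "foldr (\<lambda>K acc. mat_adjoint K * K + acc) [perm_mat n p] (0\<^sub>m n n) = 1\<^sub>m n"
    by (simp add: perm_mat_adjoint perm_mat_square)
next
  fix K \<sigma> assume K: "K \<in> set [perm_mat n p]" and "incoherent_state n \<sigma>"
  then have \<sigma>: "\<sigma> \<in> carrier_mat n n" "diagonal_mat \<sigma>"
    using psd_carrier by (auto simp: incoherent_state_def density_def)
  have "p i \<noteq> p j" if "i \<noteq> j" for i j by (metis involutive that)
  then have "diagonal_mat (mat n n (\<lambda>(i,j). \<sigma> $$ (p i, p j)))"
    using \<sigma> maps_into unfolding diagonal_mat_def by auto
  then show "diagonal_mat (K * \<sigma> * mat_adjoint K)"
    using K \<sigma>(1) by (simp add: perm_mat_adjoint perm_mat_conj)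
qed simp

end

section \<open>Bell locality and the CHSH inequality\<close>

lemma foldr_add_mat:
  assumes "\<forall>a\<in>set xs. f a \<in> carrier_mat n n"
  shows "foldr (\<lambda>a acc. f a + acc) xs (0\<^sub>m n n) \<in> carrier_mat n n \<and>
    (\<forall>i<n. \<forall>j<n. foldr (\<lambda>a acc. f a + acc) xs (0\<^sub>m n n) $$ (i,j) = (\<Sum>a\<leftarrow>xs. f a $$ (i,j)))"
  using assms by (induction xs) auto

lemma povm_family_diag_sum:
  assumes "povm_family n m r M" and "x < m" and "i < n"
  shows "(\<Sum>a<r. Re (M x a $$ (i,i))) = 1"
proof -
  have "\<forall>a\<in>set [0..<r]. M x a \<in> carrier_mat n n"
    using assms(1,2) psd_carrier by (auto simp: povm_family_def)
  moreover have "foldr (\<lambda>a acc. M x a + acc) [0..<r] (0\<^sub>m n n) = 1\<^sub>m n"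
    using assms(1,2) by (simp add: povm_family_def)
  ultimately have "(\<Sum>a\<leftarrow>[0..<r]. M x a $$ (i,i)) = 1"
    using foldr_add_mat assms(3) by (metis index_one_mat(1))
  then show ?thesis
    by (simp add: sum_set_upt_conv_sum_list_nat[symmetric] atLeast0LessThan flip: Re_sum)
qed

lemma povm_family_two_outcomes:
  assumes "\<And>x a. x < m \<Longrightarrow> a < 2 \<Longrightarrow> psd n (M x a)" and "\<And>x. x < m \<Longrightarrow> M x 0 + M x 1 = 1\<^sub>m n"
  shows "povm_family n m 2 M"
  unfolding povm_family_def
proof (intro allI impI conjI)
  fix x assume x: "x < m"
  have "M x 1 \<in> carrier_mat n n" using assms(1)[OF x, of 1] psd_carrier by simp
  then show "foldr (\<lambda>a acc. M x a + acc) [0..<2] (0\<^sub>m n n) = 1\<^sub>m n"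
    using assms(2)[OF x] by (simp add: upt_rec)
qed (use assms(1) in simp)

lemma mtrace_diagonal_mult_kron:
  assumes \<sigma>: "\<sigma> \<in> carrier_mat (dA * dB) (dA * dB)" and "diagonal_mat \<sigma>"
    and M: "M \<in> carrier_mat dA dA" and N: "N \<in> carrier_mat dB dB"
  shows "mtrace (\<sigma> * kron M N) =
    (\<Sum>h<dA * dB. \<sigma> $$ (h,h) * M $$ (h div dB, h div dB) * N $$ (h mod dB, h mod dB))"
proof -
  have "mtrace (\<sigma> * kron M N) = (\<Sum>h<dA * dB. \<Sum>g<dA * dB. \<sigma> $$ (h,g) * kron M N $$ (g,h))"
    by (rule mtrace_mult[OF \<sigma> kron_carrier_mat[OF M N]])
  also have "\<dots> = (\<Sum>h<dA * dB. \<sigma> $$ (h,h) * kron M N $$ (h,h))"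
    using assms(2) \<sigma> unfolding diagonal_mat_def by (intro sum.cong[OF refl] sum_lessThan_single) auto
  also have "\<dots> = (\<Sum>h<dA * dB. \<sigma> $$ (h,h) * M $$ (h div dB, h div dB) * N $$ (h mod dB, h mod dB))"
    using M N by (intro sum.cong refl) (simp add: kron_entry mult.assoc)
  finally show ?thesis .
qed

lemma bell_local_diagonal:
  assumes "0 < dB" and "density (dA * dB) \<sigma>" and "diagonal_mat \<sigma>"
  shows "bell_local dA dB \<sigma>"
  unfolding bell_local_def
proof (intro allI impI)
  fix mA mB oA oB M N assume "povm_family dA mA oA M \<and> povm_family dB mB oB N"
  then have M: "povm_family dA mA oA M" and N: "povm_family dB mB oB N" by auto
  have \<sigma>: "psd (dA * dB) \<sigma>" "mtrace \<sigma> = 1" using assms(2) by (auto simp: density_def)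
  have \<sigma>c: "\<sigma> \<in> carrier_mat (dA * dB) (dA * dB)" using \<sigma>(1) by (rule psd_carrier)
  have h_div: "h div dB < dA" and h_mod: "h mod dB < dB" if "h < dA * dB" for h
    using that assms(1) by (auto simp: less_mult_imp_div_less)
  \<comment> \<open>The hidden variable is the product basis index \<open>h\<close>, drawn with the diagonal weight of \<open>\<sigma>\<close>;
    each party answers with the diagonal of its POVM element at its own part of \<open>h\<close>.\<close>
  define q where "q h = Re (\<sigma> $$ (h,h))" for h
  define PA where "PA h x a = Re (M x a $$ (h div dB, h div dB))" for h x a
  define PB where "PB h y b = Re (N y b $$ (h mod dB, h mod dB))" for h y b
  have M_psd: "psd dA (M x a)" if "x < mA" "a < oA" for x a
    using M that by (simp add: povm_family_def)
  have N_psd: "psd dB (N y b)" if "y < mB" "b < oB" for y b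
    using N that by (simp add: povm_family_def)
  have "mtrace (\<sigma> * kron (M x a) (N y b)) = complex_of_real (\<Sum>h<dA * dB. q h * PA h x a * PB h y b)"
    if xa: "x < mA" "a < oA" and yb: "y < mB" "b < oB" for x y a b
  proof -
    have Mc: "M x a \<in> carrier_mat dA dA" and Nc: "N y b \<in> carrier_mat dB dB"
      using psd_carrier M_psd[OF xa] N_psd[OF yb] by auto
    have "mtrace (\<sigma> * kron (M x a) (N y b)) =
        (\<Sum>h<dA * dB. \<sigma> $$ (h,h) * M x a $$ (h div dB, h div dB) * N y b $$ (h mod dB, h mod dB))"
      by (rule mtrace_diagonal_mult_kron[OF \<sigma>c assms(3) Mc Nc])
    also have "\<dots> = (\<Sum>h<dA * dB. complex_of_real (q h * PA h x a * PB h y b))"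
      using psd_diag(1)[OF \<sigma>(1)] psd_diag(1)[OF M_psd[OF xa] h_div] psd_diag(1)[OF N_psd[OF yb] h_mod]
      by (intro sum.cong refl) (simp add: q_def PA_def PB_def complex_eq_iff)
    finally show ?thesis by simp
  qed
  moreover have "(\<Sum>h<dA * dB. q h) = 1"
    using \<sigma>(2) \<sigma>c by (simp add: q_def mtrace_def flip: Re_sum)
  moreover have "q h \<ge> 0" if "h < dA * dB" for h
    using psd_diag(2)[OF \<sigma>(1) that] by (simp add: q_def)
  moreover have "PA h x a \<ge> 0" if "h < dA * dB" "x < mA" "a < oA" for h x a
    using psd_diag(2)[OF M_psd h_div] that by (simp add: PA_def)
  moreover have "PB h y b \<ge> 0" if "h < dA * dB" "y < mB" "b < oB" for h y b
    using psd_diag(2)[OF N_psd h_mod] that by (simp add: PB_def)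
  moreover have "(\<Sum>a<oA. PA h x a) = 1" if "h < dA * dB" "x < mA" for h x
    using povm_family_diag_sum[OF M that(2) h_div[OF that(1)]] by (simp add: PA_def)
  moreover have "(\<Sum>b<oB. PB h y b) = 1" if "h < dA * dB" "y < mB" for h y
    using povm_family_diag_sum[OF N that(2) h_mod[OF that(1)]] by (simp add: PB_def)
  ultimately show "\<exists>nh (q :: nat \<Rightarrow> real) (PA :: nat \<Rightarrow> nat \<Rightarrow> nat \<Rightarrow> real) (PB :: nat \<Rightarrow> nat \<Rightarrow> nat \<Rightarrow> real).
          (\<forall>h<nh. q h \<ge> 0) \<and> (\<Sum>h<nh. q h) = 1 \<and>
          (\<forall>h<nh. \<forall>x<mA. (\<forall>a<oA. PA h x a \<ge> 0) \<and> (\<Sum>a<oA. PA h x a) = 1) \<and>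
          (\<forall>h<nh. \<forall>y<mB. (\<forall>b<oB. PB h y b \<ge> 0) \<and> (\<Sum>b<oB. PB h y b) = 1) \<and>
          (\<forall>x<mA. \<forall>y<mB. \<forall>a<oA. \<forall>b<oB.
             mtrace (\<sigma> * kron (M x a) (N y b)) = complex_of_real (\<Sum>h<nh. q h * PA h x a * PB h y b))"
    by blast
qed

definition correlator :: "(nat \<Rightarrow> nat \<Rightarrow> nat \<Rightarrow> nat \<Rightarrow> 'a::ab_group_add) \<Rightarrow> nat \<Rightarrow> nat \<Rightarrow> 'a" where
  "correlator P x y = P x y 0 0 - P x y 0 1 - P x y 1 0 + P x y 1 1"

definition chsh :: "(nat \<Rightarrow> nat \<Rightarrow> nat \<Rightarrow> nat \<Rightarrow> 'a::ab_group_add) \<Rightarrow> 'a" where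
  "chsh P = correlator P 0 0 + correlator P 0 1 + correlator P 1 0 - correlator P 1 1"

lemma mult_le_abs_if_abs_le_one:
  fixes a b :: real
  assumes "\<bar>a\<bar> \<le> 1"
  shows "a * b \<le> \<bar>b\<bar>"
proof -
  have "a * b \<le> \<bar>a\<bar> * \<bar>b\<bar>" by (metis abs_ge_self abs_mult)
  also have "\<dots> \<le> \<bar>b\<bar>" using assms by (simp add: mult_left_le_one_le)
  finally show ?thesis .
qed

lemma chsh_deterministic_le:
  fixes A0 A1 B0 B1 :: real
  assumes "\<bar>A0\<bar> \<le> 1" "\<bar>A1\<bar> \<le> 1" "\<bar>B0\<bar> \<le> 1" "\<bar>B1\<bar> \<le> 1"
  shows "A0 * (B0 + B1) + A1 * (B0 - B1) \<le> 2"
  using mult_le_abs_if_abs_le_one[OF assms(1), of "B0 + B1"] mult_le_abs_if_abs_le_one[OF assms(2), of "B0 - B1"]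
    assms(3,4) by linarith

lemma chsh_lhv_le:
  fixes q :: "nat \<Rightarrow> real" and PA PB :: "nat \<Rightarrow> nat \<Rightarrow> nat \<Rightarrow> real"
  assumes q: "\<forall>h<nh. q h \<ge> 0" "(\<Sum>h<nh. q h) = 1"
    and PA: "\<forall>h<nh. \<forall>x<2. (\<forall>a<2. PA h x a \<ge> 0) \<and> (\<Sum>a<2. PA h x a) = 1"
    and PB: "\<forall>h<nh. \<forall>y<2. (\<forall>b<2. PB h y b \<ge> 0) \<and> (\<Sum>b<2. PB h y b) = 1"
  shows "chsh (\<lambda>x y a b. \<Sum>h<nh. q h * PA h x a * PB h y b) \<le> 2"
proof -
  define A where "A h x = PA h x 0 - PA h x 1" for h x
  define B where "B h y = PB h y 0 - PB h y 1" for h y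
  have AB: "\<bar>A h x\<bar> \<le> 1" "\<bar>B h x\<bar> \<le> 1" if "h < nh" "x < 2" for h x
  proof -
    have "PA h x 0 \<ge> 0" "PA h x 1 \<ge> 0" "PA h x 0 + PA h x 1 = 1"
      "PB h x 0 \<ge> 0" "PB h x 1 \<ge> 0" "PB h x 0 + PB h x 1 = 1"
      using PA PB that by (auto simp: numeral_2_eq_2)
    then show "\<bar>A h x\<bar> \<le> 1" "\<bar>B h x\<bar> \<le> 1" unfolding A_def B_def by linarith+
  qed
  have "chsh (\<lambda>x y a b. \<Sum>h<nh. q h * PA h x a * PB h y b)
      = (\<Sum>h<nh. q h * (A h 0 * (B h 0 + B h 1) + A h 1 * (B h 0 - B h 1)))"
    unfolding chsh_def correlator_def A_def B_def
    by (simp add: sum_subtractf[symmetric] sum.distrib[symmetric] algebra_simps)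
  also have "\<dots> \<le> (\<Sum>h<nh. q h * 2)"
    using AB q(1) by (intro sum_mono mult_left_mono chsh_deterministic_le) auto
  also have "\<dots> = 2" using q(2) by (simp add: sum_distrib_right[symmetric])
  finally show ?thesis .
qed

lemma bell_local_chsh_le:
  assumes "bell_local dA dB \<sigma>" and "povm_family dA 2 2 M" and "povm_family dB 2 2 N"
  shows "Re (chsh (\<lambda>x y a b. mtrace (\<sigma> * kron (M x a) (N y b)))) \<le> 2"
proof -
  obtain nh and q :: "nat \<Rightarrow> real" and PA PB :: "nat \<Rightarrow> nat \<Rightarrow> nat \<Rightarrow> real"
    where q: "\<forall>h<nh. q h \<ge> 0" "(\<Sum>h<nh. q h) = 1"
      and PA: "\<forall>h<nh. \<forall>x<2. (\<forall>a<2. PA h x a \<ge> 0) \<and> (\<Sum>a<2. PA h x a) = 1"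
      and PB: "\<forall>h<nh. \<forall>y<2. (\<forall>b<2. PB h y b \<ge> 0) \<and> (\<Sum>b<2. PB h y b) = 1"
      and model: "\<forall>x<2. \<forall>y<2. \<forall>a<2. \<forall>b<2. mtrace (\<sigma> * kron (M x a) (N y b)) =
                    complex_of_real (\<Sum>h<nh. q h * PA h x a * PB h y b)"
    using assms(1)[unfolded bell_local_def, rule_format, OF conjI[OF assms(2,3)]] by blast
  have "chsh (\<lambda>x y a b. mtrace (\<sigma> * kron (M x a) (N y b))) =
      complex_of_real (chsh (\<lambda>x y a b. \<Sum>h<nh. q h * PA h x a * PB h y b))"
    unfolding chsh_def correlator_def using model by simp
  then show ?thesis using chsh_lhv_le[OF q PA PB] by simp
qed

lemma chsh_violation_value:
  fixes r :: real
  assumes "r > 0"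
  defines "s \<equiv> sqrt (1 + r^2)"
  shows "(1/s)^2 + (r/s)^2 = 1" and "2 * ((1/s)^2 - (r/s)^2) + 8 * (1/s) * (r/s) * r > 2"
proof -
  have p: "0 < 1 + r^2" by (simp add: add_pos_nonneg)
  then have "s^2 = 1 + r^2" unfolding s_def by simp
  then have e: "(1/s)^2 = 1 / (1 + r^2)" "(r/s)^2 = r^2 / (1 + r^2)" "8 * (1/s) * (r/s) * r = 8 * r^2 / (1 + r^2)"
    by (simp_all add: power_divide power2_eq_square)
  show "(1/s)^2 + (r/s)^2 = 1"
    unfolding e using p by (simp add: field_simps)
  have "2 * (1 / (1 + r^2) - r^2 / (1 + r^2)) + 8 * r^2 / (1 + r^2) = (2 + 6 * r^2) / (1 + r^2)"
    by (simp add: diff_divide_distrib[symmetric] add_divide_distrib[symmetric] algebra_simps)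
  also have "\<dots> > 2" using p assms(1) by (simp add: pos_less_divide_eq)
  finally show "2 * ((1/s)^2 - (r/s)^2) + 8 * (1/s) * (r/s) * r > 2" unfolding e .
qed

section \<open>A CHSH violation after swapping two basis vectors\<close>

locale two_levels =
  fixes d k l :: nat
  assumes two_le_d: "2 \<le> d" and k_lt_d: "k < d" and l_lt_d: "l < d" and k_neq_l: "k \<noteq> l"
begin

text \<open>Product basis indices of \<open>|k0\<rangle>\<close>, \<open>|l0\<rangle>\<close> and \<open>|l1\<rangle>\<close>.\<close>

abbreviation k0 :: nat where "k0 \<equiv> k * d"

abbreviation l0 :: nat where "l0 \<equiv> l * d"

abbreviation l1 :: nat where "l1 \<equiv> Suc (l * d)"

lemma index_div_mod:
  "k0 div d = k" "k0 mod d = 0" "l0 div d = l" "l0 mod d = 0" "l1 div d = l" "l1 mod d = 1"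
  using two_le_d div_mult_self1[of d 1 l] by (auto simp: mod_Suc)

lemma index_bounds: "k0 < d * d" "l0 < d * d" "l1 < d * d"
proof -
  have "x * d + 1 < d * d" if "x < d" for x
  proof -
    have "x * d + d \<le> d * d" using that by (metis Suc_leI add.commute mult_Suc mult_le_mono1)
    then show ?thesis using two_le_d by linarith
  qed
  then show "k0 < d * d" "l0 < d * d" "l1 < d * d" using k_lt_d l_lt_d by (auto intro: le_less_trans)
qed

lemma index_neq: "k0 \<noteq> l1" "k0 \<noteq> l0"
  using index_div_mod k_neq_l by metis+

lemma mtrace_mult_kron_supported:
  assumes \<sigma>: "\<sigma> \<in> carrier_mat (d * d) (d * d)" and supp: "supported_on (d * d) {k0, l1} \<sigma>"
    and M: "M \<in> carrier_mat d d" and N: "N \<in> carrier_mat d d"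
  shows "mtrace (\<sigma> * kron M N) =
    \<sigma> $$ (k0,k0) * M $$ (k,k) * N $$ (0,0) + \<sigma> $$ (k0,l1) * M $$ (l,k) * N $$ (1,0) +
    \<sigma> $$ (l1,k0) * M $$ (k,l) * N $$ (0,1) + \<sigma> $$ (l1,l1) * M $$ (l,l) * N $$ (1,1)"
proof -
  have "mtrace (\<sigma> * kron M N) = (\<Sum>i<d * d. \<Sum>j<d * d. \<sigma> $$ (i,j) * kron M N $$ (j,i))"
    by (rule mtrace_mult[OF \<sigma> kron_carrier_mat[OF M N]])
  also have "\<dots> = \<sigma> $$ (k0,k0) * kron M N $$ (k0,k0) + \<sigma> $$ (k0,l1) * kron M N $$ (l1,k0)
      + \<sigma> $$ (l1,k0) * kron M N $$ (k0,l1) + \<sigma> $$ (l1,l1) * kron M N $$ (l1,l1)"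
    by (rule double_sum_supported_on_pair[OF supp index_bounds(1,3) index_neq(1)])
  also have "\<dots> = \<sigma> $$ (k0,k0) * M $$ (k,k) * N $$ (0,0) + \<sigma> $$ (k0,l1) * M $$ (l,k) * N $$ (1,0) +
    \<sigma> $$ (l1,k0) * M $$ (k,l) * N $$ (0,1) + \<sigma> $$ (l1,l1) * M $$ (l,l) * N $$ (1,1)"
    using M N index_bounds by (simp add: kron_entry index_div_mod mult.assoc)
  finally show ?thesis .
qed

text \<open>
  Alice measures the qubit \<open>span {|k\<rangle>, |l\<rangle>}\<close> in the \<open>\<sigma>\<^sub>z\<close> basis (\<open>x = 0\<close>) and in the basis
  \<open>(|k\<rangle> \<plusminus> cnj \<omega> |l\<rangle>)/\<surd>2\<close> (\<open>x = 1\<close>); Bob measures the qubit \<open>span {|0\<rangle>, |1\<rangle>}\<close> in the basis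
  \<open>(\<alpha>, \<plusminus>\<beta>), (\<plusminus>\<beta>, -\<alpha>)\<close> for \<open>y = 0, 1\<close>. All other basis vectors count as outcome 0.
\<close>

definition alice_povm :: "complex \<Rightarrow> nat \<Rightarrow> nat \<Rightarrow> complex mat" where
  "alice_povm \<omega> x a = (let h = complex_of_real (sqrt (1/2)) in
     if x = 0 then
       (if a = 0 then diag_plus_rank_one d (\<lambda>i. if i = l then 0 else 1) (0\<^sub>v d)
        else diag_plus_rank_one d (\<lambda>i. if i = l then 1 else 0) (0\<^sub>v d))
     else
       (if a = 0 then diag_plus_rank_one d (\<lambda>i. if i = k \<or> i = l then 0 else 1) (two_point_vec d k l h (cnj \<omega> * h))
        else diag_plus_rank_one d (\<lambda>i. 0) (two_point_vec d k l h (- cnj \<omega> * h))))"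

definition bob_povm :: "real \<Rightarrow> real \<Rightarrow> nat \<Rightarrow> nat \<Rightarrow> complex mat" where
  "bob_povm \<alpha> \<beta> y b = (let s = (if y = 0 then 1 else -1) in
     if b = 0 then diag_plus_rank_one d (\<lambda>i. if i \<le> 1 then 0 else 1)
         (two_point_vec d 0 1 (complex_of_real \<alpha>) (complex_of_real (s * \<beta>)))
     else diag_plus_rank_one d (\<lambda>i. 0) (two_point_vec d 0 1 (complex_of_real (s * \<beta>)) (- complex_of_real \<alpha>)))"

lemma alice_povm_carrier [simp]: "alice_povm \<omega> x a \<in> carrier_mat d d"
  by (simp add: alice_povm_def Let_def)

lemma bob_povm_carrier [simp]: "bob_povm \<alpha> \<beta> y b \<in> carrier_mat d d"
  by (simp add: bob_povm_def Let_def)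

lemma povm_family_alice:
  assumes "\<omega> * cnj \<omega> = 1"
  shows "povm_family d 2 2 (alice_povm \<omega>)"
proof (rule povm_family_two_outcomes)
  show "psd d (alice_povm \<omega> x a)" for x a
    unfolding alice_povm_def Let_def by (auto intro!: psd_diag_plus_rank_one)
  have h: "complex_of_real (sqrt (1/2)) * complex_of_real (sqrt (1/2)) = 1/2"
    by (simp flip: of_real_mult)
  have \<omega>h: "\<omega> * (cnj \<omega> * (complex_of_real (sqrt (1/2)) * complex_of_real (sqrt (1/2)))) = 1/2"
    using assms h by (metis mult.assoc mult_1)
  show "alice_povm \<omega> x 0 + alice_povm \<omega> x 1 = 1\<^sub>m d" if "x < 2" for x
    by (rule eq_matI)
      (use that k_lt_d l_lt_d k_neq_l h \<omega>h in \<open>auto simp: alice_povm_def Let_def diag_plus_rank_one_entry two_point_vec_def algebra_simps\<close>)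
qed

lemma povm_family_bob:
  assumes "\<alpha>^2 + \<beta>^2 = 1"
  shows "povm_family d 2 2 (bob_povm \<alpha> \<beta>)"
proof (rule povm_family_two_outcomes)
  show "psd d (bob_povm \<alpha> \<beta> y b)" for y b
    unfolding bob_povm_def Let_def by (auto intro!: psd_diag_plus_rank_one)
  have norm: "complex_of_real \<alpha> * complex_of_real \<alpha> + complex_of_real \<beta> * complex_of_real \<beta> = 1"
    using assms by (metis of_real_1 of_real_add of_real_mult power2_eq_square)
  show "bob_povm \<alpha> \<beta> y 0 + bob_povm \<alpha> \<beta> y 1 = 1\<^sub>m d" if "y < 2" for y
    by (rule eq_matI)
      (use that two_le_d norm in \<open>auto simp: bob_povm_def Let_def diag_plus_rank_one_entry two_point_vec_def algebra_simps\<close>)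
qed

lemma chsh_alice_bob:
  assumes \<sigma>: "\<sigma> \<in> carrier_mat (d * d) (d * d)" and supp: "supported_on (d * d) {k0, l1} \<sigma>"
    and herm: "\<sigma> $$ (l1,k0) = cnj (\<sigma> $$ (k0,l1))" and tr: "\<sigma> $$ (k0,k0) + \<sigma> $$ (l1,l1) = 1"
    and r: "\<sigma> $$ (k0,l1) * cnj \<omega> = complex_of_real r"
  shows "chsh (\<lambda>x y a b. mtrace (\<sigma> * kron (alice_povm \<omega> x a) (bob_povm \<alpha> \<beta> y b))) =
    complex_of_real (2 * (\<alpha>^2 - \<beta>^2) + 8 * \<alpha> * \<beta> * r)"
proof -
  define Q where "Q x y a b = mtrace (\<sigma> * kron (alice_povm \<omega> x a) (bob_povm \<alpha> \<beta> y b))" for x y a b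
  have r': "cnj (\<sigma> $$ (k0,l1)) * \<omega> = complex_of_real r" using arg_cong[OF r, of cnj] by simp
  have h: "complex_of_real (sqrt (1/2)) * complex_of_real (sqrt (1/2)) = 1/2" by (simp flip: of_real_mult)
  note trace = mtrace_mult_kron_supported[OF \<sigma> supp alice_povm_carrier bob_povm_carrier]
  have "correlator Q 0 y = (\<sigma> $$ (k0,k0) + \<sigma> $$ (l1,l1)) * complex_of_real (\<alpha>^2 - \<beta>^2)" for y
    unfolding correlator_def Q_def trace using k_lt_d l_lt_d k_neq_l two_le_d
    by (simp add: alice_povm_def bob_povm_def Let_def diag_plus_rank_one_entry two_point_vec_def
        algebra_simps power2_eq_square)
  then have E0: "correlator Q 0 y = complex_of_real (\<alpha>^2 - \<beta>^2)" for y
    using tr by simp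
  have "correlator Q 1 y = complex_of_real (if y = 0 then 4 else -4) * complex_of_real \<alpha> * complex_of_real \<beta> *
      (complex_of_real (sqrt (1/2)) * complex_of_real (sqrt (1/2))) *
      (\<sigma> $$ (k0,l1) * cnj \<omega> + cnj (\<sigma> $$ (k0,l1)) * \<omega>)" for y
    unfolding correlator_def Q_def trace herm using k_lt_d l_lt_d k_neq_l two_le_d
    by (simp add: alice_povm_def bob_povm_def Let_def diag_plus_rank_one_entry two_point_vec_def
        algebra_simps)
  then have E1: "correlator Q 1 y = complex_of_real ((if y = 0 then 4 else -4) * \<alpha> * \<beta> * r)" for y
    unfolding h r r' by simp
  show ?thesis unfolding Q_def[symmetric] chsh_def E0 E1 by simp
qed

lemma not_bell_local_supported:
  assumes \<sigma>: "\<sigma> \<in> carrier_mat (d * d) (d * d)" and supp: "supported_on (d * d) {k0, l1} \<sigma>"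
    and herm: "\<sigma> $$ (l1,k0) = cnj (\<sigma> $$ (k0,l1))" and tr: "\<sigma> $$ (k0,k0) + \<sigma> $$ (l1,l1) = 1"
    and coh: "\<sigma> $$ (k0,l1) \<noteq> 0"
  shows "\<not> bell_local d d \<sigma>"
proof
  assume local: "bell_local d d \<sigma>"
  define r where "r = cmod (\<sigma> $$ (k0,l1))"
  \<comment> \<open>\<open>\<omega>\<close> is the phase of the coherence; the choice of \<open>\<alpha>, \<beta>\<close> is convenient, not optimal.\<close>
  define \<omega> where "\<omega> = \<sigma> $$ (k0,l1) / complex_of_real r"
  define \<alpha> where "\<alpha> = 1 / sqrt (1 + r^2)"
  define \<beta> where "\<beta> = r / sqrt (1 + r^2)"
  have r: "r > 0" using coh by (simp add: r_def)
  have norm: "\<sigma> $$ (k0,l1) * cnj (\<sigma> $$ (k0,l1)) = complex_of_real r * complex_of_real r"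
    using complex_norm_square[of "\<sigma> $$ (k0,l1)"] by (simp add: r_def power2_eq_square)
  then have \<omega>: "\<omega> * cnj \<omega> = 1" and phase: "\<sigma> $$ (k0,l1) * cnj \<omega> = complex_of_real r"
    using r by (simp_all add: \<omega>_def field_simps)
  have \<alpha>\<beta>: "\<alpha>^2 + \<beta>^2 = 1" and violation: "2 * (\<alpha>^2 - \<beta>^2) + 8 * \<alpha> * \<beta> * r > 2"
    using chsh_violation_value[OF r] by (simp_all add: \<alpha>_def \<beta>_def)
  have "Re (chsh (\<lambda>x y a b. mtrace (\<sigma> * kron (alice_povm \<omega> x a) (bob_povm \<alpha> \<beta> y b)))) \<le> 2"
    by (rule bell_local_chsh_le[OF local povm_family_alice[OF \<omega>] povm_family_bob[OF \<alpha>\<beta>]])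
  then show False
    unfolding chsh_alice_bob[OF \<sigma> supp herm tr phase] using violation by simp
qed

abbreviation swap_l :: "nat \<Rightarrow> nat" where "swap_l \<equiv> Transposition.transpose l0 l1"

lemma index_involution_swap_l: "index_involution (d * d) swap_l"
  using index_bounds by unfold_locales (auto simp: transpose_def)

lemma swap_l_simps: "swap_l k0 = k0" "swap_l l1 = l0"
  using index_neq by (auto simp: transpose_def)

lemma swap_kron_ket0_proj:
  assumes \<rho>: "\<rho> \<in> carrier_mat d d"
  defines "\<sigma> \<equiv> apply_kraus (d * d) [perm_mat (d * d) swap_l] (kron \<rho> (ket0_proj d))"
  shows "\<sigma> \<in> carrier_mat (d * d) (d * d)"
    and "\<sigma> $$ (k0,k0) = \<rho> $$ (k,k)" "\<sigma> $$ (k0,l1) = \<rho> $$ (k,l)"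
    and "\<sigma> $$ (l1,k0) = \<rho> $$ (l,k)" "\<sigma> $$ (l1,l1) = \<rho> $$ (l,l)"
    and "supported_on d {k,l} \<rho> \<Longrightarrow> supported_on (d * d) {k0, l1} \<sigma>"
proof -
  interpret index_involution "d * d" swap_l by (rule index_involution_swap_l)
  have \<sigma>_def': "\<sigma> = mat (d * d) (d * d) (\<lambda>(i,j). kron \<rho> (ket0_proj d) $$ (swap_l i, swap_l j))"
    unfolding \<sigma>_def using \<rho> by (intro apply_kraus_perm_mat kron_carrier_mat) simp_all
  then show "\<sigma> \<in> carrier_mat (d * d) (d * d)" by simp
  have entry: "\<sigma> $$ (i,j) = (if swap_l i mod d = 0 \<and> swap_l j mod d = 0
      then \<rho> $$ (swap_l i div d, swap_l j div d) else 0)" if "i < d * d" "j < d * d" for i j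
    unfolding \<sigma>_def' using that maps_into \<rho> by (simp add: kron_ket0_proj_entry)
  show "\<sigma> $$ (k0,k0) = \<rho> $$ (k,k)" "\<sigma> $$ (k0,l1) = \<rho> $$ (k,l)"
    "\<sigma> $$ (l1,k0) = \<rho> $$ (l,k)" "\<sigma> $$ (l1,l1) = \<rho> $$ (l,l)"
    using index_bounds by (simp_all add: entry swap_l_simps index_div_mod)
  assume supp: "supported_on d {k,l} \<rho>"
  show "supported_on (d * d) {k0, l1} \<sigma>"
    unfolding supported_on_def
  proof (intro allI impI)
    fix i j assume ij: "i < d * d" "j < d * d" and "\<sigma> $$ (i,j) \<noteq> 0"
    then have mod: "swap_l i mod d = 0" "swap_l j mod d = 0"
      and "\<rho> $$ (swap_l i div d, swap_l j div d) \<noteq> 0" by (auto simp: entry split: if_splits)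
    moreover have "swap_l i div d < d" "swap_l j div d < d"
      using ij maps_into by (auto simp: less_mult_imp_div_less)
    ultimately have "swap_l i div d \<in> {k,l}" "swap_l j div d \<in> {k,l}"
      using supp unfolding supported_on_def by blast+
    then have "swap_l i \<in> {k0, l0}" "swap_l j \<in> {k0, l0}"
      using mod by (metis div_mult_mod_eq add_0_right insert_iff singletonD)+
    then show "i \<in> {k0, l1} \<and> j \<in> {k0, l1}"
      by (metis swap_l_simps involutive insert_iff singletonD)
  qed
qed

lemma coherent_two_level_nonlocal:
  assumes \<rho>: "density d \<rho>" and supp: "supported_on d {k,l} \<rho>" and coh: "\<rho> $$ (k,l) \<noteq> 0"
  shows "\<exists>Ks. incoherent_operation (d * d) Ks \<and>
    bell_nonlocal d d (apply_kraus (d * d) Ks (kron \<rho> (ket0_proj d)))"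
proof (intro exI conjI)
  let ?\<sigma> = "apply_kraus (d * d) [perm_mat (d * d) swap_l] (kron \<rho> (ket0_proj d))"
  show "incoherent_operation (d * d) [perm_mat (d * d) swap_l]"
    by (rule index_involution.incoherent_operation_perm_mat[OF index_involution_swap_l])
  have psd: "psd d \<rho>" and "mtrace \<rho> = 1" using \<rho> by (auto simp: density_def)
  then have tr: "\<rho> $$ (k,k) + \<rho> $$ (l,l) = 1"
    using mtrace_supported_on_pair[OF psd_carrier[OF psd] supp k_lt_d l_lt_d k_neq_l] by simp
  note \<sigma> = swap_kron_ket0_proj[OF psd_carrier[OF psd]]
  have supp\<sigma>: "supported_on (d * d) {k0, l1} ?\<sigma>" by (rule \<sigma>(6)[OF supp])
  have "psd (d * d) ?\<sigma>"
    by (rule psd_supported_on_pair[OF \<sigma>(1) supp\<sigma> index_bounds(1,3) index_neq(1) psd k_lt_d l_lt_d k_neq_l])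
      (simp_all add: \<sigma>(2-5))
  moreover have "mtrace ?\<sigma> = 1"
    using mtrace_supported_on_pair[OF \<sigma>(1) supp\<sigma> index_bounds(1,3) index_neq(1)] \<sigma>(2,5) tr by simp
  moreover have "\<not> bell_local d d ?\<sigma>"
    by (rule not_bell_local_supported[OF \<sigma>(1) supp\<sigma>])
      (simp_all add: \<sigma>(2-5) tr coh psd_hermitian[OF psd k_lt_d l_lt_d])
  ultimately show "bell_nonlocal d d ?\<sigma>" by (simp add: bell_nonlocal_def density_def)
qed

end

theorem mainTheorem3:
  fixes d :: nat and \<rho> :: "complex mat" and k l :: nat
  assumes "d \<ge> 2"
    and "density d \<rho>"
    and "vec_space.rank d \<rho> = 2"
    and "k < d" and "l < d" and "k \<noteq> l"
    and "Re (\<rho> $$ (k,k)) > 0" and "Re (\<rho> $$ (l,l)) > 0"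
    and "\<rho> $$ (k,k) + \<rho> $$ (l,l) = 1"
  shows "(\<exists>Ks. incoherent_operation (d * d) Ks \<and>
            bell_nonlocal d d (apply_kraus (d * d) Ks (kron \<rho> (ket0_proj d))))
         \<longleftrightarrow> coherent_state d \<rho>"
proof
  assume "\<exists>Ks. incoherent_operation (d * d) Ks \<and>
            bell_nonlocal d d (apply_kraus (d * d) Ks (kron \<rho> (ket0_proj d)))"
  then obtain Ks where op: "incoherent_operation (d * d) Ks"
    and nonlocal: "bell_nonlocal d d (apply_kraus (d * d) Ks (kron \<rho> (ket0_proj d)))" by blast
  show "coherent_state d \<rho>"
    unfolding coherent_state_def
  proof (intro conjI notI)
    assume "diagonal_mat \<rho>"
    with assms(1,2) have "incoherent_state (d * d) (kron \<rho> (ket0_proj d))"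
      by (intro incoherent_state_kron incoherent_state_ket0_proj) (simp_all add: incoherent_state_def)
    then have "diagonal_mat (apply_kraus (d * d) Ks (kron \<rho> (ket0_proj d)))"
      by (rule incoherent_operation_diagonal[OF op])
    then have "bell_local d d (apply_kraus (d * d) Ks (kron \<rho> (ket0_proj d)))"
      using nonlocal assms(1) by (intro bell_local_diagonal) (simp_all add: bell_nonlocal_def)
    with nonlocal show False by (simp add: bell_nonlocal_def)
  qed (rule assms(2))
next
  assume coherent: "coherent_state d \<rho>"
  interpret two_levels d k l using assms by unfold_locales
  have "supported_on d {k,l} \<rho>" using density_supported_on_pair assms by blast
  moreover have "\<rho> $$ (k,l) \<noteq> 0"
    using coherent calculation assms(4,5) supported_on_pair_not_diagonal
    by (auto simp: coherent_state_def density_def)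
  ultimately show "\<exists>Ks. incoherent_operation (d * d) Ks \<and>
      bell_nonlocal d d (apply_kraus (d * d) Ks (kron \<rho> (ket0_proj d)))"
    using coherent_two_level_nonlocal assms(2) by blast
qed

end
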